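(* Let $N\ge 2$ and let $g$ be a probability density on ${\mathbb S}^1$ with $g(w)=g(w^* )$ for all $w$. Consider the BDG jump process on ${\mathbb T}_N=({\mathbb S}^1)^N$: at each jump a pair $i<j$ is chosen uniformly among the $\binom N2$ pairs and $(v_i,v_j)$ is replaced by $(W_i\overline v_{i,j},W_j\overline v_{i,j})$, where $\overline v_{i,j}=(v_i+v_j)/|v_i+v_j|$ and $W_i,W_j$ are independent with density $g$, all other velocities unchanged. Let $Q$ be its Markov transition operator, $Q\varphi(\vec v)=\mathrm E\{\varphi(\vec V_{k+1})\mid \vec V_k=\vec v\}$. Then the adjoint $Q^*$ of $Q$ in $L^2({\mathbb T}_N,{\rm d}^Nv)$ is $Q^*=\binom N2^{-1}\sum_{i<j}Q^*_{(i,j)}$, where $$Q^*_{(i,j)}F(\vec v)=\int_{{\mathbb T}_2}F(v_1,\dots,y_i,\dots,y_j,\dots,v_N)\,g(v_i\overline y_{i,j}^* )\,g(v_j\overline y_{i,j}^* )\,{\rm d}y_i\,{\rm d}y_j,\qquad \overline y_{i,j}=\frac{y_i+y_j}{|y_i+y_j|},$$ and consequently the master equation of the BDG dynamics is $\frac{d}{dt}F=L^*F$ with $$L^*=N\binom N2^{-1}\sum_{i<j}\big(Q^*_{(i,j)}-I\big).$$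
   Context: ${\mathbb S}^1$ is the unit circle in the complex plane, with products of velocities meaning complex multiplication and $w^*$ the complex conjugate; ${\rm d}v$ is the uniform (normalized) measure on ${\mathbb S}^1$ and ${\rm d}^Nv$ its $N$-fold product. Probability densities on ${\mathbb T}_N$ are taken with respect to ${\rm d}^Nv$. The time-continuous master equation associated with a discrete-time Markov chain with transition operator $Q$ is, by definition, $\frac{d}{dt}F(\vec v,t)=L^*F(\vec v,t)$, $F(\cdot,0)=F_0$, where $L^*=N(Q^*-I)$ with $Q^*$ the $L^2({\mathbb T}_N)$-adjoint of $Q$ (so that the density of $\vec V_{k+1}$ is $Q^*$ applied to the density of $\vec V_k$). *)

theory Defs
  imports "HOL-Probability.Probability"
begin

definition circle_measure :: "complex measure" where
  "circle_measure = distr (restrict_space lborel {0..<1})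
      (restrict_space borel (sphere 0 1)) (\<lambda>t. cis (2 * pi * t))"

definition torus :: "nat \<Rightarrow> (nat \<Rightarrow> complex) measure" where
  "torus N = PiM {..<N} (\<lambda>_. circle_measure)"

text \<open>Normalized direction (z/|z|); the null case z = 0 (a null set) is fixed to 1.\<close>
definition cdir :: "complex \<Rightarrow> complex" where
  "cdir z = (if z = 0 then 1 else z / complex_of_real (cmod z))"

definition pairs :: "nat \<Rightarrow> (nat \<times> nat) set" where
  "pairs N = {(i, j). i < j \<and> j < N}"

definition BDG_Q :: "nat \<Rightarrow> (complex \<Rightarrow> real) \<Rightarrow> ((nat \<Rightarrow> complex) \<Rightarrow> real)
    \<Rightarrow> (nat \<Rightarrow> complex) \<Rightarrow> real" where
  "BDG_Q N g \<phi> v = (1 / real (N choose 2)) *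
     (\<Sum>(i, j)\<in>pairs N.
        \<integral>w. \<phi> (v(i := fst w * cdir (v i + v j), j := snd w * cdir (v i + v j)))
          \<partial>(density circle_measure (\<lambda>x. ennreal (g x)) \<Otimes>\<^sub>M density circle_measure (\<lambda>x. ennreal (g x))))"

definition Qstar_pair :: "(complex \<Rightarrow> real) \<Rightarrow> nat \<Rightarrow> nat \<Rightarrow> ((nat \<Rightarrow> complex) \<Rightarrow> real)
    \<Rightarrow> (nat \<Rightarrow> complex) \<Rightarrow> real" where
  "Qstar_pair g i j F v =
     (\<integral>y. F (v(i := fst y, j := snd y))
           * g (v i * cnj (cdir (fst y + snd y)))
           * g (v j * cnj (cdir (fst y + snd y)))
        \<partial>(circle_measure \<Otimes>\<^sub>M circle_measure))"

definition is_adjoint_on :: "(nat \<Rightarrow> complex) measure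
    \<Rightarrow> (((nat \<Rightarrow> complex) \<Rightarrow> real) \<Rightarrow> (nat \<Rightarrow> complex) \<Rightarrow> real)
    \<Rightarrow> (((nat \<Rightarrow> complex) \<Rightarrow> real) \<Rightarrow> (nat \<Rightarrow> complex) \<Rightarrow> real) \<Rightarrow> bool" where
  "is_adjoint_on M Q Qs \<longleftrightarrow>
     (\<forall>\<phi> F. \<phi> \<in> borel_measurable M \<longrightarrow> F \<in> borel_measurable M \<longrightarrow>
        (\<exists>B. \<forall>v\<in>space M. \<bar>\<phi> v\<bar> \<le> B) \<longrightarrow> (\<exists>B. \<forall>v\<in>space M. \<bar>F v\<bar> \<le> B) \<longrightarrow>
        (\<integral>v. Q \<phi> v * F v \<partial>M) = (\<integral>v. \<phi> v * Qs F v \<partial>M))"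

definition master_generator :: "nat \<Rightarrow> (((nat \<Rightarrow> complex) \<Rightarrow> real) \<Rightarrow> (nat \<Rightarrow> complex) \<Rightarrow> real)
    \<Rightarrow> ((nat \<Rightarrow> complex) \<Rightarrow> real) \<Rightarrow> (nat \<Rightarrow> complex) \<Rightarrow> real" where
  "master_generator N Qs F v = real N * (Qs F v - F v)"

end

theory Submission
  imports Defs
begin

text \<open>
  Q is the average of the pair operators Q_ij, so it suffices to show that Q_ij and Q*_ij are
  adjoint. Writing out the densities of the jump variables W_i, W_j and using Fubini,
  <Q_ij \<phi>, F> becomes an integral over T_N \<times> S^1 \<times> S^1 of an expression in the state v
  before the jump and the state v' after it. The map (v, W) \<mapsto> (v', (v_i, v_j)) preserves the product
  of uniform measures: it is a rotation of (W_i, W_j) by the direction of v_i + v_j, under which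
  the uniform measure on the circle is invariant, followed by the exchange of (v_i, v_j) with
  the new pair, which merely permutes coordinates of a product measure. Since v'_i + v'_j has the
  same direction as v_i + v_j, W_k = v'_k times the conjugate of that direction, and the
  transformed integral is <\<phi>, Q*_ij F>. The formula for the generator only uses that there
  are (N choose 2) pairs.
\<close>

section \<open>Measure-preserving maps of product measures\<close>

lemma
  fixes f :: "'a \<Rightarrow> 'b::{banach, second_countable_topology}"
  assumes T: "T \<in> measurable M M" and invariant: "distr M M T = M"
    and f: "f \<in> borel_measurable M"
  shows integrable_comp_invariant: "integrable M (\<lambda>x. f (T x)) \<longleftrightarrow> integrable M f"
    and integral_comp_invariant: "(\<integral>x. f (T x) \<partial>M) = (\<integral>x. f x \<partial>M)"
  using integrable_distr_eq[OF T, of f] integral_distr[OF T, of f] f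
  unfolding invariant by simp_all

lemma (in prob_space) integrable_pair_snd:
  fixes f :: "'b \<Rightarrow> 'c::{banach, second_countable_topology}"
  assumes N: "sigma_finite_measure N" and f: "integrable N f"
  shows "integrable (M \<Otimes>\<^sub>M N) (\<lambda>x. f (snd x))"
proof -
  interpret N: sigma_finite_measure N by (rule N)
  interpret pair_sigma_finite M N ..
  show ?thesis
    using f by (intro Fubini_integrable) (auto intro: measurable_compose[OF measurable_snd])
qed

lemma measurable_fun_upd2:
  assumes "i \<in> I" "j \<in> I" and "f \<in> measurable M (PiM I N)"
    and "a \<in> measurable M (N i)" and "b \<in> measurable M (N j)"
  shows "(\<lambda>x. (f x)(i := a x, j := b x)) \<in> measurable M (PiM I N)"
  using assms by (intro measurable_fun_upd[where J = I]) auto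

lemma distr_skew_product:
  assumes K: "sigma_finite_measure K"
    and T: "(\<lambda>x. (fst x, T (fst x) (snd x))) \<in> measurable (M \<Otimes>\<^sub>M K) (M \<Otimes>\<^sub>M K)"
    and invariant: "\<And>x. x \<in> space M \<Longrightarrow> distr K K (T x) = K"
  shows "distr (M \<Otimes>\<^sub>M K) (M \<Otimes>\<^sub>M K) (\<lambda>x. (fst x, T (fst x) (snd x))) = M \<Otimes>\<^sub>M K"
    (is "distr _ _ ?T = _")
proof (rule measure_eqI)
  interpret K: sigma_finite_measure K by (rule K)
  have Tx: "T x \<in> measurable K K" if "x \<in> space M" for x
    using measurable_compose[OF measurable_compose[OF measurable_Pair1'[OF that] T] measurable_snd]
    by simp
  fix A assume "A \<in> sets (distr (M \<Otimes>\<^sub>M K) (M \<Otimes>\<^sub>M K) ?T)"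
  then have A: "A \<in> sets (M \<Otimes>\<^sub>M K)" by simp
  have "emeasure (distr (M \<Otimes>\<^sub>M K) (M \<Otimes>\<^sub>M K) ?T) A
      = emeasure (M \<Otimes>\<^sub>M K) (?T -` A \<inter> space (M \<Otimes>\<^sub>M K))"
    using A T by (simp add: emeasure_distr)
  also have "\<dots> = (\<integral>\<^sup>+x. emeasure K (Pair x -` (?T -` A \<inter> space (M \<Otimes>\<^sub>M K))) \<partial>M)"
    using A T by (intro K.emeasure_pair_measure_alt measurable_sets)
  also have "\<dots> = (\<integral>\<^sup>+x. emeasure K (Pair x -` A) \<partial>M)"
  proof (rule nn_integral_cong)
    fix x assume x: "x \<in> space M"
    have "Pair x -` (?T -` A \<inter> space (M \<Otimes>\<^sub>M K)) = T x -` (Pair x -` A) \<inter> space K"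
      using x by (auto simp: space_pair_measure)
    then show "emeasure K (Pair x -` (?T -` A \<inter> space (M \<Otimes>\<^sub>M K))) = emeasure K (Pair x -` A)"
      using emeasure_distr[OF Tx[OF x] sets_Pair1[OF A]] by (simp add: invariant[OF x])
  qed
  also have "\<dots> = emeasure (M \<Otimes>\<^sub>M K) A"
    using A by (rule K.emeasure_pair_measure_alt[symmetric])
  finally show "emeasure (distr (M \<Otimes>\<^sub>M K) (M \<Otimes>\<^sub>M K) ?T) A = emeasure (M \<Otimes>\<^sub>M K) A" .
qed simp

lemma pair_swap_box_preimage:
  assumes ij: "i \<in> I" "j \<in> I" "i \<noteq> j"
    and A: "\<And>k. k \<in> I \<Longrightarrow> A k \<subseteq> S" and B: "B1 \<subseteq> S" "B2 \<subseteq> S"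
  shows "(\<lambda>x. ((fst x)(i := fst (snd x), j := snd (snd x)), (fst x i, fst x j)))
      -` ((\<Pi>\<^sub>E k\<in>I. A k) \<times> (B1 \<times> B2)) \<inter> ((\<Pi>\<^sub>E k\<in>I. S) \<times> (S \<times> S))
    = (\<Pi>\<^sub>E k\<in>I. (A(i := B1, j := B2)) k) \<times> (A i \<times> A j)"
  using assms by (auto simp: PiE_iff extensional_def split: if_splits) (blast+)

lemma measurable_PiM_pair_swap:
  assumes ij: "i \<in> I" "j \<in> I"
  shows "(\<lambda>x. ((fst x)(i := fst (snd x), j := snd (snd x)), (fst x i, fst x j)))
    \<in> measurable (PiM I (\<lambda>_. K) \<Otimes>\<^sub>M (K \<Otimes>\<^sub>M K)) (PiM I (\<lambda>_. K) \<Otimes>\<^sub>M (K \<Otimes>\<^sub>M K))"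
proof (rule measurable_Pair)
  show "(\<lambda>x. (fst x)(i := fst (snd x), j := snd (snd x)))
      \<in> measurable (PiM I (\<lambda>_. K) \<Otimes>\<^sub>M (K \<Otimes>\<^sub>M K)) (PiM I (\<lambda>_. K))"
    using measurable_fun_upd2[where N = "\<lambda>_. K", OF ij measurable_fst
        measurable_compose[OF measurable_snd measurable_fst]
        measurable_compose[OF measurable_snd measurable_snd]]
    by simp
  show "(\<lambda>x. (fst x i, fst x j)) \<in> measurable (PiM I (\<lambda>_. K) \<Otimes>\<^sub>M (K \<Otimes>\<^sub>M K)) (K \<Otimes>\<^sub>M K)"
    by (rule measurable_Pair;
        rule measurable_compose[OF measurable_fst measurable_component_singleton], fact ij)
qed

definition PiM_pair_boxes :: "'i set \<Rightarrow> 'a measure \<Rightarrow> (('i \<Rightarrow> 'a) \<times> 'a \<times> 'a) set set" where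
  "PiM_pair_boxes I K = {(\<Pi>\<^sub>E k\<in>I. A k) \<times> (B1 \<times> B2) | A B1 B2.
     (\<forall>k\<in>I. A k \<in> sets K) \<and> B1 \<in> sets K \<and> B2 \<in> sets K}"

lemma PiM_pair_boxes_subset_space:
  "PiM_pair_boxes I K \<subseteq> Pow (space (PiM I (\<lambda>_. K) \<Otimes>\<^sub>M (K \<Otimes>\<^sub>M K)))"
proof
  fix X assume "X \<in> PiM_pair_boxes I K"
  then obtain A B1 B2 where X: "X = (\<Pi>\<^sub>E k\<in>I. A k) \<times> (B1 \<times> B2)"
    and "\<forall>k\<in>I. A k \<in> sets K" "B1 \<in> sets K" "B2 \<in> sets K"
    unfolding PiM_pair_boxes_def by blast
  then have "X \<subseteq> (\<Pi>\<^sub>E k\<in>I. space K) \<times> (space K \<times> space K)"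
    unfolding X by (intro Sigma_mono PiE_mono) (auto dest: sets.sets_into_space)
  then show "X \<in> Pow (space (PiM I (\<lambda>_. K) \<Otimes>\<^sub>M (K \<Otimes>\<^sub>M K)))"
    by (simp add: space_pair_measure space_PiM)
qed

lemma Int_stable_PiM_pair_boxes: "Int_stable (PiM_pair_boxes I K)"
proof (rule Int_stableI)
  fix X Y assume "X \<in> PiM_pair_boxes I K" "Y \<in> PiM_pair_boxes I K"
  then obtain A B1 B2 A' B1' B2' where
    "X = (\<Pi>\<^sub>E k\<in>I. A k) \<times> (B1 \<times> B2)" "\<forall>k\<in>I. A k \<in> sets K" "B1 \<in> sets K" "B2 \<in> sets K"
    "Y = (\<Pi>\<^sub>E k\<in>I. A' k) \<times> (B1' \<times> B2')" "\<forall>k\<in>I. A' k \<in> sets K" "B1' \<in> sets K" "B2' \<in> sets K"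
    unfolding PiM_pair_boxes_def by blast
  then show "X \<inter> Y \<in> PiM_pair_boxes I K"
    unfolding PiM_pair_boxes_def
    by (intro CollectI exI[of _ "\<lambda>k. A k \<inter> A' k"] exI[of _ "B1 \<inter> B1'"] exI[of _ "B2 \<inter> B2'"])
      (auto simp: PiE_Int Times_Int_Times)
qed

lemma sets_PiM_pair_eq_boxes:
  assumes "finite I"
  shows "sets (PiM I (\<lambda>_. K) \<Otimes>\<^sub>M (K \<Otimes>\<^sub>M K))
    = sigma_sets (space (PiM I (\<lambda>_. K) \<Otimes>\<^sub>M (K \<Otimes>\<^sub>M K))) (PiM_pair_boxes I K)"
proof -
  let ?E = "{b1 \<times> b2 | b1 b2. b1 \<in> sets K \<and> b2 \<in> sets K}"
  have generators: "{a \<times> b | a b. a \<in> prod_algebra I (\<lambda>_. K) \<and> b \<in> ?E} = PiM_pair_boxes I K"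
    unfolding prod_algebra_eq_finite[OF assms] PiM_pair_boxes_def by blast
  have "sets (PiM I (\<lambda>_. K) \<Otimes>\<^sub>M (K \<Otimes>\<^sub>M K))
      = sets (sigma (space (PiM I (\<lambda>_. K)) \<times> space (K \<Otimes>\<^sub>M K)) (PiM_pair_boxes I K))"
    unfolding generators[symmetric]
  proof (rule sets_pair_eq)
    show "prod_algebra I (\<lambda>_. K) \<subseteq> Pow (space (PiM I (\<lambda>_. K)))"
      unfolding space_PiM by (rule prod_algebra_sets_into_space)
    show "sets (PiM I (\<lambda>_. K)) = sigma_sets (space (PiM I (\<lambda>_. K))) (prod_algebra I (\<lambda>_. K))"
      by (simp add: sets_PiM space_PiM)
    show "{space (PiM I (\<lambda>_. K))} \<subseteq> prod_algebra I (\<lambda>_. K)"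
      unfolding space_PiM using space_in_prod_algebra by auto
    show "?E \<subseteq> Pow (space (K \<Otimes>\<^sub>M K))"
      by (auto simp: space_pair_measure dest: sets.sets_into_space)
    show "sets (K \<Otimes>\<^sub>M K) = sigma_sets (space (K \<Otimes>\<^sub>M K)) ?E"
      by (simp add: sets_pair_measure space_pair_measure)
    show "{space (K \<Otimes>\<^sub>M K)} \<subseteq> ?E"
      by (auto simp: space_pair_measure)
  qed simp_all
  then show ?thesis
    using PiM_pair_boxes_subset_space[of I K] by (simp add: space_pair_measure)
qed

lemma emeasure_PiM_pair_box:
  assumes K: "prob_space K" and I: "finite I"
    and A: "\<And>k. k \<in> I \<Longrightarrow> A k \<in> sets K" and B: "B1 \<in> sets K" "B2 \<in> sets K"
  shows "emeasure (PiM I (\<lambda>_. K) \<Otimes>\<^sub>M (K \<Otimes>\<^sub>M K)) ((\<Pi>\<^sub>E k\<in>I. A k) \<times> (B1 \<times> B2))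
    = (\<Prod>k\<in>I. emeasure K (A k)) * (emeasure K B1 * emeasure K B2)"
proof -
  interpret K: prob_space K by (rule K)
  interpret KK: prob_space "K \<Otimes>\<^sub>M K" by (intro prob_space_pair K)
  interpret PiK: product_prob_space "\<lambda>_. K" I by unfold_locales
  show ?thesis
    using A B I
    by (simp add: KK.emeasure_pair_measure_Times K.emeasure_pair_measure_Times
        PiK.emeasure_PiM sets_PiM_I_finite)
qed

lemma distr_PiM_pair_swap:
  assumes K: "prob_space K" and I: "finite I" and ij: "i \<in> I" "j \<in> I" "i \<noteq> j"
  defines "M \<equiv> PiM I (\<lambda>_. K) \<Otimes>\<^sub>M (K \<Otimes>\<^sub>M K)"
  shows "distr M M (\<lambda>x. ((fst x)(i := fst (snd x), j := snd (snd x)), (fst x i, fst x j))) = M"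
    (is "distr _ _ ?\<Psi> = _")
proof (rule measure_eqI_generator_eq[OF Int_stable_PiM_pair_boxes, where A = "\<lambda>_. space M"])
  interpret M: prob_space M
    unfolding M_def by (intro prob_space_pair prob_space_PiM K)
  have \<Psi>: "?\<Psi> \<in> measurable M M"
    unfolding M_def using ij(1,2) by (rule measurable_PiM_pair_swap)
  have sets_M: "sets M = sigma_sets (space M) (PiM_pair_boxes I K)"
    unfolding M_def using I by (rule sets_PiM_pair_eq_boxes)
  then show "sets (distr M M ?\<Psi>) = sigma_sets (space M) (PiM_pair_boxes I K)"
    "sets M = sigma_sets (space M) (PiM_pair_boxes I K)" by simp_all
  show "emeasure (distr M M ?\<Psi>) (space M) \<noteq> \<infinity>"
    using prob_space.emeasure_space_1[OF M.prob_space_distr[OF \<Psi>]] by simp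
  show "range (\<lambda>_. space M) \<subseteq> PiM_pair_boxes I K"
    by (auto simp: M_def PiM_pair_boxes_def space_pair_measure space_PiM intro!: exI[of _ "\<lambda>_. space K"])
  fix X assume "X \<in> PiM_pair_boxes I K"
  then have "X \<in> sets M" using sets_M by auto
  from \<open>X \<in> PiM_pair_boxes I K\<close> obtain A B1 B2 where X: "X = (\<Pi>\<^sub>E k\<in>I. A k) \<times> (B1 \<times> B2)"
    and A: "\<And>k. k \<in> I \<Longrightarrow> A k \<in> sets K" and B: "B1 \<in> sets K" "B2 \<in> sets K"
    unfolding PiM_pair_boxes_def by blast
  define A' where "A' = A(i := B1, j := B2)"
  have "emeasure (distr M M ?\<Psi>) X = emeasure M (?\<Psi> -` X \<inter> space M)"
    using \<Psi> \<open>X \<in> sets M\<close> by (rule emeasure_distr)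
  also have "?\<Psi> -` X \<inter> space M = (\<Pi>\<^sub>E k\<in>I. A' k) \<times> (A i \<times> A j)"
    unfolding X A'_def M_def space_pair_measure space_PiM using ij A B sets.sets_into_space
    by (intro pair_swap_box_preimage) auto
  also have "emeasure M \<dots> = (\<Prod>k\<in>I. emeasure K (A' k)) * (emeasure K (A i) * emeasure K (A j))"
    unfolding M_def using K I A B ij by (intro emeasure_PiM_pair_box) (auto simp: A'_def)
  also have "\<dots> = (\<Prod>k\<in>I. emeasure K (A k)) * (emeasure K B1 * emeasure K B2)"
    using I ij by (simp add: A'_def prod.remove[of I i] prod.remove[of "I - {i}" j] ac_simps)
  also have "\<dots> = emeasure M X"
    unfolding X M_def using K I A B by (intro emeasure_PiM_pair_box[symmetric])
  finally show "emeasure (distr M M ?\<Psi>) X = emeasure M X" .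
qed (simp_all add: M_def PiM_pair_boxes_subset_space)

section \<open>The uniform measure on the circle\<close>

lemma cis_2pi_measurable:
  "(\<lambda>t::real. cis (2 * pi * t)) \<in> borel_measurable borel"
  unfolding cis_conv_exp by (intro borel_measurable_continuous_onI continuous_intros)

lemma cis_2pi_measurable_circle:
  "(\<lambda>t::real. cis (2 * pi * t))
     \<in> measurable (restrict_space lborel {0..<1}) (restrict_space borel (sphere 0 1))"
  by (intro measurable_restrict_space1 measurable_restrict_space2)
    (auto simp: cis_2pi_measurable)

lemma space_circle_measure: "space circle_measure = sphere 0 1"
  by (simp add: circle_measure_def space_restrict_space)

lemma sets_circle_measure: "sets circle_measure = sets (restrict_space borel (sphere 0 1))"
  by (simp add: circle_measure_def)

lemma measurable_circle_measure_iff: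
  "f \<in> measurable M circle_measure \<longleftrightarrow> f \<in> borel_measurable M \<and> f \<in> space M \<rightarrow> sphere 0 1"
  by (simp add: measurable_cong_sets[OF refl sets_circle_measure] measurable_restrict_space2_iff)

lemma borel_measurable_circle_measure_iff:
  "f \<in> borel_measurable circle_measure \<longleftrightarrow> f \<in> borel_measurable (restrict_space borel (sphere 0 1))"
  by (simp add: measurable_cong_sets[OF sets_circle_measure refl])

lemma measurable_circle_measure_mult:
  assumes "a \<in> measurable M circle_measure" "b \<in> borel_measurable M"
    and "\<And>x. x \<in> space M \<Longrightarrow> cmod (b x) = 1"
  shows "(\<lambda>x. a x * b x) \<in> measurable M circle_measure"
  using assms by (auto simp: measurable_circle_measure_iff norm_mult)

lemma nn_integral_circle_measure:
  assumes "f \<in> borel_measurable circle_measure"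
  shows "(\<integral>\<^sup>+z. f z \<partial>circle_measure)
    = (\<integral>\<^sup>+t. f (cis (2 * pi * t)) * indicator {0..<1} t \<partial>lborel)"
proof -
  have "(\<integral>\<^sup>+z. f z \<partial>circle_measure)
      = (\<integral>\<^sup>+t. f (cis (2 * pi * t)) \<partial>restrict_space lborel {0..<1})"
    unfolding circle_measure_def
    using assms by (intro nn_integral_distr cis_2pi_measurable_circle)
      (simp add: borel_measurable_circle_measure_iff)
  also have "\<dots> = (\<integral>\<^sup>+t. f (cis (2 * pi * t)) * indicator {0..<1} t \<partial>lborel)"
    by (subst nn_integral_restrict_space) (auto intro!: nn_integral_cong simp: indicator_def)
  finally show ?thesis .
qed

lemma prob_space_circle_measure: "prob_space circle_measure"
proof
  have "emeasure circle_measure (space circle_measure) = (\<integral>\<^sup>+z. 1 \<partial>circle_measure)"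
    by simp
  also have "\<dots> = (\<integral>\<^sup>+t. indicator {0..<1::real} t \<partial>lborel)"
    by (subst nn_integral_circle_measure) auto
  also have "\<dots> = 1"
    by simp
  finally show "emeasure circle_measure (space circle_measure) = 1" .
qed

lemma nn_integral_periodic_shift:
  fixes h :: "real \<Rightarrow> ennreal"
  assumes [measurable]: "h \<in> borel_measurable borel"
    and periodic: "\<And>t. h (t + 1) = h t" and s: "0 \<le> s" "s \<le> 1"
  shows "(\<integral>\<^sup>+t. h (t + s) * indicator {0..<1} t \<partial>lborel)
    = (\<integral>\<^sup>+t. h t * indicator {0..<1} t \<partial>lborel)"
proof -
  have shift: "(\<integral>\<^sup>+t. h (t + a) * indicator {a'..<b'} (t + a) \<partial>lborel)
      = (\<integral>\<^sup>+u. h u * indicator {a'..<b'} u \<partial>lborel)" for a a' b' :: real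
    using nn_integral_real_affine[of "\<lambda>u. h u * indicator {a'..<b'} u" 1 a]
    by (simp add: add.commute)
  have split: "(\<integral>\<^sup>+u. h u * indicator {a..<c} u \<partial>lborel)
      = (\<integral>\<^sup>+u. h u * indicator {a..<b} u \<partial>lborel) + (\<integral>\<^sup>+u. h u * indicator {b..<c} u \<partial>lborel)"
    if "a \<le> b" "b \<le> c" for a b c :: real
    using that by (subst nn_integral_add[symmetric])
      (auto intro!: nn_integral_cong simp: indicator_def distrib_left[symmetric])
  have "(\<integral>\<^sup>+t. h (t + s) * indicator {0..<1} t \<partial>lborel)
      = (\<integral>\<^sup>+t. h (t + s) * indicator {s..<1+s} (t + s) \<partial>lborel)"
    by (intro nn_integral_cong) (auto simp: indicator_def)
  also have "\<dots> = (\<integral>\<^sup>+u. h u * indicator {s..<1+s} u \<partial>lborel)"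
    by (rule shift)
  also have "\<dots> = (\<integral>\<^sup>+u. h u * indicator {s..<1} u \<partial>lborel)
      + (\<integral>\<^sup>+u. h u * indicator {1..<1+s} u \<partial>lborel)"
    using s by (intro split) auto
  also have "(\<integral>\<^sup>+u. h u * indicator {1..<1+s} u \<partial>lborel)
      = (\<integral>\<^sup>+u. h (u + 1) * indicator {1..<1+s} (u + 1) \<partial>lborel)"
    by (rule shift[symmetric])
  also have "\<dots> = (\<integral>\<^sup>+u. h u * indicator {0..<s} u \<partial>lborel)"
    using periodic by (intro nn_integral_cong) (auto simp: indicator_def)
  also have "(\<integral>\<^sup>+u. h u * indicator {s..<1} u \<partial>lborel) + \<dots>
      = (\<integral>\<^sup>+t. h t * indicator {0..<1} t \<partial>lborel)"
    using s split[of 0 s 1] by (simp add: add.commute)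
  finally show ?thesis .
qed

lemma cis_2pi_periodic: "cis (2 * pi * (t + 1)) = cis (2 * pi * t)"
proof -
  have "2 * pi * (t + 1) = 2 * pi * t + 2 * pi" by (simp add: algebra_simps)
  then show ?thesis by (simp add: cis.ctr)
qed

lemma unit_complex_eq_cis:
  assumes "cmod c = 1"
  obtains s where "0 \<le> s" "s < 1" "c = cis (2 * pi * s)"
proof -
  have "c \<noteq> 0" using assms by auto
  then have c: "c = cis (Arg c)" and Arg: "- pi < Arg c" "Arg c \<le> pi"
    using assms Arg_correct[of c] by (auto simp: sgn_div_norm)
  show ?thesis
  proof (cases "0 \<le> Arg c")
    case True
    with Arg c show ?thesis by (intro that[of "Arg c / (2 * pi)"]) auto
  next
    case False
    have "cis (2 * pi * (Arg c / (2 * pi) + 1)) = c"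
      using c by (simp add: cis_2pi_periodic)
    moreover have "0 \<le> Arg c / (2 * pi) + 1" "Arg c / (2 * pi) + 1 < 1"
      using Arg False by (simp_all add: field_simps)
    ultimately show ?thesis by (intro that) auto
  qed
qed

lemma measurable_rotation_circle:
  "cmod c = 1 \<Longrightarrow> (\<lambda>z. c * z) \<in> measurable circle_measure circle_measure"
  by (auto simp: measurable_circle_measure_iff space_circle_measure norm_mult
      borel_measurable_circle_measure_iff intro!: measurable_restrict_space1)

lemma circle_measure_rotation_invariant:
  assumes "cmod c = 1"
  shows "distr circle_measure circle_measure (\<lambda>z. c * z) = circle_measure"
proof (rule measure_eqI)
  obtain s where s: "0 \<le> s" "s < 1" "c = cis (2 * pi * s)"
    using unit_complex_eq_cis[OF assms] by blast
  have rotation: "(\<lambda>z. c * z) \<in> measurable circle_measure circle_measure"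
    using assms by (rule measurable_rotation_circle)
  fix A assume "A \<in> sets (distr circle_measure circle_measure (\<lambda>z. c * z))"
  then have A: "A \<in> sets circle_measure" by simp
  then have "A \<in> sets borel"
    unfolding sets_circle_measure by (auto simp: sets_restrict_space_iff)
  then have h: "(\<lambda>t. indicator A (cis (2 * pi * t)) :: ennreal) \<in> borel_measurable borel"
    by (intro measurable_compose[OF cis_2pi_measurable] borel_measurable_indicator)
  have "emeasure (distr circle_measure circle_measure (\<lambda>z. c * z)) A
      = (\<integral>\<^sup>+z. indicator A (c * z) \<partial>circle_measure)"
    using A by (subst nn_integral_distr[OF rotation, symmetric])
      (simp_all add: borel_measurable_indicator)
  also have "\<dots> = (\<integral>\<^sup>+t. indicator A (c * cis (2 * pi * t)) * indicator {0..<1} t \<partial>lborel)"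
    by (rule nn_integral_circle_measure)
      (rule measurable_compose[OF rotation borel_measurable_indicator[OF A]])
  also have "\<dots> = (\<integral>\<^sup>+t. indicator A (cis (2 * pi * (t + s))) * indicator {0..<1} t \<partial>lborel)"
    by (simp add: s(3) cis_mult distrib_left add.commute)
  also have "\<dots> = (\<integral>\<^sup>+t. indicator A (cis (2 * pi * t)) * indicator {0..<1} t \<partial>lborel)"
    using s by (intro nn_integral_periodic_shift[OF h]) (simp_all add: cis_2pi_periodic)
  also have "\<dots> = (\<integral>\<^sup>+z. indicator A z \<partial>circle_measure)"
    using A by (subst nn_integral_circle_measure) (simp_all add: borel_measurable_indicator)
  also have "\<dots> = emeasure circle_measure A"
    using A by simp
  finally show "emeasure (distr circle_measure circle_measure (\<lambda>z. c * z)) A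
      = emeasure circle_measure A" .
qed simp

abbreviation circle_pair_measure :: "(complex \<times> complex) measure" where
  "circle_pair_measure \<equiv> circle_measure \<Otimes>\<^sub>M circle_measure"

lemma circle_pair_rotation_invariant:
  assumes "cmod c = 1"
  shows "distr circle_pair_measure circle_pair_measure (\<lambda>w. (c * fst w, c * snd w))
    = circle_pair_measure"
proof -
  have "sigma_finite_measure (distr circle_measure circle_measure (\<lambda>z. c * z))"
    unfolding circle_measure_rotation_invariant[OF assms]
    using prob_space_circle_measure by (rule prob_space_imp_sigma_finite)
  from pair_measure_distr[OF measurable_rotation_circle measurable_rotation_circle this] assms
  show ?thesis
    by (simp add: circle_measure_rotation_invariant case_prod_beta')
qed

lemma measurable_circle_skew_rotation:
  assumes c: "c \<in> borel_measurable M" "\<And>x. x \<in> space M \<Longrightarrow> cmod (c x) = 1"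
  shows "(\<lambda>x. (fst x, (c (fst x) * fst (snd x), c (fst x) * snd (snd x))))
    \<in> measurable (M \<Otimes>\<^sub>M circle_pair_measure) (M \<Otimes>\<^sub>M circle_pair_measure)"
proof -
  have c': "(\<lambda>x. c (fst x)) \<in> borel_measurable (M \<Otimes>\<^sub>M circle_pair_measure)"
    "\<And>x. x \<in> space (M \<Otimes>\<^sub>M circle_pair_measure) \<Longrightarrow> cmod (c (fst x)) = 1"
    using c by (auto simp: space_pair_measure)
  have "(\<lambda>x. fst (snd x) * c (fst x)) \<in> measurable (M \<Otimes>\<^sub>M circle_pair_measure) circle_measure"
    by (rule measurable_circle_measure_mult[OF _ c']) simp
  moreover have "(\<lambda>x. snd (snd x) * c (fst x)) \<in> measurable (M \<Otimes>\<^sub>M circle_pair_measure) circle_measure"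
    by (rule measurable_circle_measure_mult[OF _ c']) simp
  ultimately show ?thesis
    by (intro measurable_Pair) (simp_all add: mult.commute)
qed

lemma distr_circle_skew_rotation:
  assumes c: "c \<in> borel_measurable M" "\<And>x. x \<in> space M \<Longrightarrow> cmod (c x) = 1"
  shows "distr (M \<Otimes>\<^sub>M circle_pair_measure) (M \<Otimes>\<^sub>M circle_pair_measure)
      (\<lambda>x. (fst x, (c (fst x) * fst (snd x), c (fst x) * snd (snd x))))
    = M \<Otimes>\<^sub>M circle_pair_measure"
  using distr_skew_product[where T = "\<lambda>x w. (c x * fst w, c x * snd w)"]
    measurable_circle_skew_rotation[OF c] circle_pair_rotation_invariant[OF c(2)]
    prob_space_imp_sigma_finite[OF prob_space_pair[OF prob_space_circle_measure prob_space_circle_measure]]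
  by simp

section \<open>The BDG pair jump\<close>

lemma borel_measurable_cdir: "cdir \<in> borel_measurable borel"
proof -
  have "(\<lambda>z::complex. if z = 0 then 1 else z / complex_of_real (cmod z)) \<in> borel_measurable borel"
    by measurable
  then show ?thesis unfolding cdir_def[abs_def] .
qed

lemma norm_cdir [simp]: "cmod (cdir z) = 1"
  by (simp add: cdir_def norm_divide)

lemma unit_mult_cnj_cancel: "cmod c = 1 \<Longrightarrow> c * y * cnj c = y"
  using complex_norm_square[of c] by (simp add: algebra_simps)

lemma measurable_torus_component:
  "k < N \<Longrightarrow> (\<lambda>v. v k) \<in> measurable (torus N) circle_measure"
  unfolding torus_def by (rule measurable_component_singleton) simp

lemma prob_space_torus: "prob_space (torus N)"
  unfolding torus_def by (intro prob_space_PiM prob_space_circle_measure)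

text \<open>The state v and jump variables w are mapped to the state after the jump together with
  the pair of velocities that the jump overwrites.\<close>

definition pair_jump :: "nat \<Rightarrow> nat \<Rightarrow> (nat \<Rightarrow> complex) \<times> complex \<times> complex
    \<Rightarrow> (nat \<Rightarrow> complex) \<times> complex \<times> complex" where
  "pair_jump i j x = (let c = cdir (fst x i + fst x j) in
     ((fst x)(i := c * fst (snd x), j := c * snd (snd x)), (fst x i, fst x j)))"

lemma pair_jump_measure_preserving:
  assumes ij: "i < j" "j < N"
  shows "pair_jump i j \<in> measurable (torus N \<Otimes>\<^sub>M circle_pair_measure) (torus N \<Otimes>\<^sub>M circle_pair_measure)"
    and "distr (torus N \<Otimes>\<^sub>M circle_pair_measure) (torus N \<Otimes>\<^sub>M circle_pair_measure) (pair_jump i j)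
      = torus N \<Otimes>\<^sub>M circle_pair_measure"
proof -
  let ?X = "torus N \<Otimes>\<^sub>M circle_pair_measure"
  let ?c = "\<lambda>v. cdir (v i + v j)"
  let ?\<Phi> = "\<lambda>x. (fst x, (?c (fst x) * fst (snd x), ?c (fst x) * snd (snd x)))"
  let ?\<Psi> = "\<lambda>x. ((fst x)(i := fst (snd x), j := snd (snd x)), (fst x i, fst x j))"
  have "?c \<in> borel_measurable (torus N)"
    using measurable_torus_component[of i N] measurable_torus_component[of j N] ij
    by (intro measurable_compose[OF _ borel_measurable_cdir] borel_measurable_add)
      (simp_all add: measurable_circle_measure_iff)
  then have \<Phi>: "?\<Phi> \<in> measurable ?X ?X" "distr ?X ?X ?\<Phi> = ?X"
    by (simp_all add: measurable_circle_skew_rotation[where c = ?c]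
        distr_circle_skew_rotation[where c = ?c])
  have \<Psi>: "?\<Psi> \<in> measurable ?X ?X" "distr ?X ?X ?\<Psi> = ?X"
    unfolding torus_def using ij
    by (simp_all add: measurable_PiM_pair_swap distr_PiM_pair_swap prob_space_circle_measure)
  have jump: "pair_jump i j = ?\<Psi> \<circ> ?\<Phi>"
    by (simp add: pair_jump_def Let_def fun_eq_iff)
  show "pair_jump i j \<in> measurable ?X ?X"
    unfolding jump using \<Phi>(1) \<Psi>(1) by (rule measurable_comp)
  show "distr ?X ?X (pair_jump i j) = ?X"
    unfolding jump using \<Phi> \<Psi> by (simp add: distr_distr[symmetric])
qed

definition Q_pair :: "(complex \<Rightarrow> real) \<Rightarrow> nat \<Rightarrow> nat \<Rightarrow> ((nat \<Rightarrow> complex) \<Rightarrow> real)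
    \<Rightarrow> (nat \<Rightarrow> complex) \<Rightarrow> real" where
  "Q_pair g i j \<phi> v =
     (\<integral>w. \<phi> (v(i := fst w * cdir (v i + v j), j := snd w * cdir (v i + v j)))
        \<partial>(density circle_measure (\<lambda>x. ennreal (g x)) \<Otimes>\<^sub>M density circle_measure (\<lambda>x. ennreal (g x))))"

lemma BDG_Q_eq_average:
  "BDG_Q N g \<phi> v = (1 / real (N choose 2)) * (\<Sum>(i, j)\<in>pairs N. Q_pair g i j \<phi> v)"
  by (simp add: BDG_Q_def Q_pair_def)

context
  fixes g :: "complex \<Rightarrow> real"
  assumes g_measurable: "g \<in> borel_measurable circle_measure"
    and g_nonneg: "\<forall>w\<in>space circle_measure. g w \<ge> 0"
    and g_normalized: "(\<integral>\<^sup>+ w. ennreal (g w) \<partial>circle_measure) = 1"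
begin

lemma prob_space_density_g: "prob_space (density circle_measure (\<lambda>x. ennreal (g x)))"
proof
  have "emeasure (density circle_measure (\<lambda>x. ennreal (g x))) (space circle_measure)
      = (\<integral>\<^sup>+ x. ennreal (g x) \<partial>circle_measure)"
    using g_measurable by (subst emeasure_density) (auto intro!: nn_integral_cong)
  then show "emeasure (density circle_measure (\<lambda>x. ennreal (g x)))
      (space (density circle_measure (\<lambda>x. ennreal (g x)))) = 1"
    by (simp add: g_normalized)
qed

lemma borel_measurable_g_pair:
  "(\<lambda>w. g (fst w) * g (snd w)) \<in> borel_measurable circle_pair_measure"
  using g_measurable by measurable

lemma density_g_pair:
  "density circle_measure (\<lambda>x. ennreal (g x)) \<Otimes>\<^sub>M density circle_measure (\<lambda>x. ennreal (g x))
    = density circle_pair_measure (\<lambda>w. ennreal (g (fst w) * g (snd w)))"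
proof -
  interpret circle: prob_space circle_measure by (rule prob_space_circle_measure)
  interpret D: prob_space "density circle_measure (\<lambda>x. ennreal (g x))"
    by (rule prob_space_density_g)
  have "density circle_measure (\<lambda>x. ennreal (g x)) \<Otimes>\<^sub>M density circle_measure (\<lambda>x. ennreal (g x))
      = density circle_pair_measure (\<lambda>(x, y). ennreal (g x) * ennreal (g y))"
    using g_measurable
    by (intro pair_measure_density) (simp_all add: D.sigma_finite_measure_axioms circle.sigma_finite_measure_axioms)
  also have "\<dots> = density circle_pair_measure (\<lambda>w. ennreal (g (fst w) * g (snd w)))"
    using g_measurable g_nonneg
    by (intro density_cong AE_I2) (auto simp: space_pair_measure ennreal_mult)
  finally show ?thesis .
qed

lemma integrable_g_pair: "integrable circle_pair_measure (\<lambda>w. g (fst w) * g (snd w))"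
proof (rule integrableI_nonneg)
  interpret D2: prob_space "density circle_pair_measure (\<lambda>w. ennreal (g (fst w) * g (snd w)))"
    unfolding density_g_pair[symmetric] by (intro prob_space_pair prob_space_density_g)
  have "(\<integral>\<^sup>+w. ennreal (g (fst w) * g (snd w)) \<partial>circle_pair_measure)
      = emeasure (density circle_pair_measure (\<lambda>w. ennreal (g (fst w) * g (snd w)))) (space circle_pair_measure)"
    using borel_measurable_g_pair by (subst emeasure_density) (auto intro!: nn_integral_cong)
  then show "(\<integral>\<^sup>+w. ennreal (g (fst w) * g (snd w)) \<partial>circle_pair_measure) < \<infinity>"
    using D2.emeasure_space_1 by simp
  show "AE w in circle_pair_measure. 0 \<le> g (fst w) * g (snd w)"
    using g_nonneg by (intro AE_I2) (auto simp: space_pair_measure)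
qed (rule borel_measurable_g_pair)

lemma integral_density_g_pair:
  assumes "\<phi> \<in> borel_measurable circle_pair_measure"
  shows "(\<integral>w. \<phi> w \<partial>(density circle_measure (\<lambda>x. ennreal (g x)) \<Otimes>\<^sub>M density circle_measure (\<lambda>x. ennreal (g x))))
    = (\<integral>w. g (fst w) * g (snd w) * \<phi> w \<partial>circle_pair_measure)"
  unfolding density_g_pair using assms borel_measurable_g_pair g_nonneg
  by (subst integral_density) (auto simp: space_pair_measure)

lemma integrable_bounded_times_g_pair:
  fixes f :: "'a \<times> complex \<times> complex \<Rightarrow> real"
  assumes M: "prob_space M" and f: "f \<in> borel_measurable (M \<Otimes>\<^sub>M circle_pair_measure)"
    and bounded: "\<And>x. x \<in> space (M \<Otimes>\<^sub>M circle_pair_measure) \<Longrightarrow> \<bar>f x\<bar> \<le> B"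
  shows "integrable (M \<Otimes>\<^sub>M circle_pair_measure) (\<lambda>x. f x * (g (fst (snd x)) * g (snd (snd x))))"
proof (rule Bochner_Integration.integrable_bound)
  show "integrable (M \<Otimes>\<^sub>M circle_pair_measure) (\<lambda>x. B * (g (fst (snd x)) * g (snd (snd x))))"
    using prob_space.integrable_pair_snd[OF M _ integrable_g_pair]
      prob_space_imp_sigma_finite[OF prob_space_pair[OF prob_space_circle_measure prob_space_circle_measure]]
    by (intro integrable_mult_right) simp
  show "(\<lambda>x. f x * (g (fst (snd x)) * g (snd (snd x)))) \<in> borel_measurable (M \<Otimes>\<^sub>M circle_pair_measure)"
    using f measurable_compose[OF measurable_snd borel_measurable_g_pair]
    by (rule borel_measurable_times)
  show "AE x in M \<Otimes>\<^sub>M circle_pair_measure.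
      norm (f x * (g (fst (snd x)) * g (snd (snd x)))) \<le> norm (B * (g (fst (snd x)) * g (snd (snd x))))"
  proof (rule AE_I2)
    fix x assume x: "x \<in> space (M \<Otimes>\<^sub>M circle_pair_measure)"
    then have "0 \<le> g (fst (snd x)) * g (snd (snd x))"
      using g_nonneg by (auto simp: space_pair_measure)
    moreover have "\<bar>f x\<bar> \<le> \<bar>B\<bar>"
      using bounded[OF x] by simp
    ultimately show "norm (f x * (g (fst (snd x)) * g (snd (snd x))))
        \<le> norm (B * (g (fst (snd x)) * g (snd (snd x))))"
      by (simp add: abs_mult mult_right_mono)
  qed
qed

lemma measurable_Qstar_pair_integrand:
  assumes ij: "i < N" "j < N" and F: "F \<in> borel_measurable (torus N)"
  shows "(\<lambda>x. F ((fst x)(i := fst (snd x), j := snd (snd x)))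
      * g (fst x i * cnj (cdir (fst (snd x) + snd (snd x))))
      * g (fst x j * cnj (cdir (fst (snd x) + snd (snd x)))))
    \<in> borel_measurable (torus N \<Otimes>\<^sub>M circle_pair_measure)"
proof -
  let ?X = "torus N \<Otimes>\<^sub>M circle_pair_measure"
  have update: "(\<lambda>x. (fst x)(i := fst (snd x), j := snd (snd x))) \<in> measurable ?X (torus N)"
    using measurable_compose[OF measurable_PiM_pair_swap[OF ij[simplified lessThan_iff[symmetric]]] measurable_fst]
    by (simp add: torus_def)
  have "(\<lambda>x. fst (snd x)) \<in> measurable ?X circle_measure" "(\<lambda>x. snd (snd x)) \<in> measurable ?X circle_measure"
    by simp_all
  then have "(\<lambda>x. cdir (fst (snd x) + snd (snd x))) \<in> borel_measurable ?X"
    by (intro measurable_compose[OF _ borel_measurable_cdir] borel_measurable_add)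
      (simp_all add: measurable_circle_measure_iff)
  then have direction: "(\<lambda>x. cnj (cdir (fst (snd x) + snd (snd x)))) \<in> borel_measurable ?X"
    by (rule measurable_compose) (intro borel_measurable_continuous_onI continuous_intros)
  have g_factor: "(\<lambda>x. g (fst x k * cnj (cdir (fst (snd x) + snd (snd x))))) \<in> borel_measurable ?X"
    if "k < N" for k
    using measurable_compose[OF measurable_fst measurable_torus_component[OF that]] direction
    by (intro measurable_compose[OF measurable_circle_measure_mult g_measurable]) simp_all
  show ?thesis
    using ij by (intro borel_measurable_times measurable_compose[OF update F] g_factor)
qed

lemma Q_pair_eq_integral:
  assumes ij: "i < j" "j < N" and \<phi>: "\<phi> \<in> borel_measurable (torus N)"
    and v: "v \<in> space (torus N)"
  shows "Q_pair g i j \<phi> v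
    = (\<integral>w. g (fst w) * g (snd w) * \<phi> (fst (pair_jump i j (v, w))) \<partial>circle_pair_measure)"
proof -
  have "(\<lambda>w. fst (pair_jump i j (v, w))) \<in> measurable circle_pair_measure (torus N)"
    using measurable_compose[OF measurable_Pair1'[OF v] pair_jump_measure_preserving(1)[OF ij]]
    by (rule measurable_compose) simp
  then have "(\<lambda>w. \<phi> (fst (pair_jump i j (v, w)))) \<in> borel_measurable circle_pair_measure"
    using \<phi> by (rule measurable_compose)
  then show ?thesis
    unfolding Q_pair_def
    by (subst integral_density_g_pair) (simp_all add: pair_jump_def Let_def mult.commute)
qed

lemma integrable_Q_pair_integrand:
  assumes ij: "i < j" "j < N"
    and \<phi>: "\<phi> \<in> borel_measurable (torus N)" "\<And>v. v \<in> space (torus N) \<Longrightarrow> \<bar>\<phi> v\<bar> \<le> B\<^sub>\<phi>"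
    and F: "F \<in> borel_measurable (torus N)" "\<And>v. v \<in> space (torus N) \<Longrightarrow> \<bar>F v\<bar> \<le> B\<^sub>F"
  shows "integrable (torus N \<Otimes>\<^sub>M circle_pair_measure)
    (\<lambda>x. F (fst x) * \<phi> (fst (pair_jump i j x)) * (g (fst (snd x)) * g (snd (snd x))))"
proof (rule integrable_bounded_times_g_pair[OF prob_space_torus])
  let ?X = "torus N \<Otimes>\<^sub>M circle_pair_measure"
  note jump = pair_jump_measure_preserving(1)[OF ij]
  have "(\<lambda>x. fst (pair_jump i j x)) \<in> measurable ?X (torus N)"
    using measurable_compose[OF jump measurable_fst] by simp
  then show "(\<lambda>x. F (fst x) * \<phi> (fst (pair_jump i j x))) \<in> borel_measurable ?X"
    by (intro borel_measurable_times measurable_compose[OF measurable_fst F(1)]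
        measurable_compose[OF _ \<phi>(1)])
  fix x assume x: "x \<in> space ?X"
  then have "fst x \<in> space (torus N)" "fst (pair_jump i j x) \<in> space (torus N)"
    using measurable_space[OF jump x] by (auto simp: space_pair_measure)
  then have "\<bar>F (fst x)\<bar> \<le> B\<^sub>F" "\<bar>\<phi> (fst (pair_jump i j x))\<bar> \<le> B\<^sub>\<phi>"
    using F(2) \<phi>(2) by simp_all
  then show "\<bar>F (fst x) * \<phi> (fst (pair_jump i j x))\<bar> \<le> B\<^sub>F * B\<^sub>\<phi>"
    unfolding abs_mult by (intro mult_mono) auto
qed

lemma Q_pair_adjoint:
  fixes \<phi> F :: "(nat \<Rightarrow> complex) \<Rightarrow> real"
  assumes ij: "i < j" "j < N"
    and \<phi>: "\<phi> \<in> borel_measurable (torus N)" "\<And>v. v \<in> space (torus N) \<Longrightarrow> \<bar>\<phi> v\<bar> \<le> B\<^sub>\<phi>"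
    and F: "F \<in> borel_measurable (torus N)" "\<And>v. v \<in> space (torus N) \<Longrightarrow> \<bar>F v\<bar> \<le> B\<^sub>F"
  shows "integrable (torus N) (\<lambda>v. Q_pair g i j \<phi> v * F v)"
    and "integrable (torus N) (\<lambda>v. \<phi> v * Qstar_pair g i j F v)"
    and "(\<integral>v. Q_pair g i j \<phi> v * F v \<partial>torus N) = (\<integral>v. \<phi> v * Qstar_pair g i j F v \<partial>torus N)"
proof -
  let ?X = "torus N \<Otimes>\<^sub>M circle_pair_measure"
  interpret T: prob_space "torus N" by (rule prob_space_torus)
  interpret C2: prob_space circle_pair_measure
    by (intro prob_space_pair prob_space_circle_measure)
  interpret X: pair_sigma_finite "torus N" circle_pair_measure ..
  note jump = pair_jump_measure_preserving[OF ij]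
  \<comment> \<open>By Fubini, h integrates to <\<phi>, Q*_ij F> and h \<circ> pair_jump i j to <Q_ij \<phi>, F>.\<close>
  define h where "h x = \<phi> (fst x) * (F ((fst x)(i := fst (snd x), j := snd (snd x)))
      * g (fst x i * cnj (cdir (fst (snd x) + snd (snd x))))
      * g (fst x j * cnj (cdir (fst (snd x) + snd (snd x)))))" for x
  have h_measurable: "h \<in> borel_measurable ?X"
    unfolding h_def[abs_def] using ij
    by (intro borel_measurable_times measurable_compose[OF measurable_fst \<phi>(1)]
        measurable_Qstar_pair_integrand F(1)) simp_all
  have h_jump: "h (pair_jump i j x)
      = F (fst x) * \<phi> (fst (pair_jump i j x)) * (g (fst (snd x)) * g (snd (snd x)))" for x
  proof -
    let ?c = "cdir (fst x i + fst x j)"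
    have "((fst x)(i := ?c * fst (snd x), j := ?c * snd (snd x)))(i := fst x i, j := fst x j) = fst x"
      by auto
    moreover have cancel: "?c * y * cnj ?c = y" for y
      by (rule unit_mult_cnj_cancel) simp
    ultimately show ?thesis
      using ij by (simp add: h_def pair_jump_def Let_def cancel)
  qed
  have h_jump_integrable: "integrable ?X (\<lambda>x. h (pair_jump i j x))"
    unfolding h_jump using ij \<phi> F by (rule integrable_Q_pair_integrand)
  then have h_integrable: "integrable ?X h"
    using integrable_comp_invariant[OF jump h_measurable] by simp
  have lhs: "Q_pair g i j \<phi> v * F v = (\<integral>w. h (pair_jump i j (v, w)) \<partial>circle_pair_measure)"
    if "v \<in> space (torus N)" for v
    using Q_pair_eq_integral[OF ij \<phi>(1) that] by (simp add: h_jump ac_simps)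
  have rhs: "\<phi> v * Qstar_pair g i j F v = (\<integral>w. h (v, w) \<partial>circle_pair_measure)" for v
    by (simp add: Qstar_pair_def h_def)
  show "integrable (torus N) (\<lambda>v. Q_pair g i j \<phi> v * F v)"
    using X.integrable_fst'[OF h_jump_integrable]
    by (simp add: Bochner_Integration.integrable_cong[OF refl lhs])
  show "integrable (torus N) (\<lambda>v. \<phi> v * Qstar_pair g i j F v)"
    using X.integrable_fst'[OF h_integrable] by (simp add: rhs)
  have "(\<integral>v. Q_pair g i j \<phi> v * F v \<partial>torus N) = (\<integral>x. h (pair_jump i j x) \<partial>?X)"
    using X.integral_fst'[OF h_jump_integrable]
    by (simp add: Bochner_Integration.integral_cong[OF refl lhs])
  also have "\<dots> = (\<integral>x. h x \<partial>?X)"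
    by (rule integral_comp_invariant[OF jump h_measurable])
  also have "\<dots> = (\<integral>v. \<phi> v * Qstar_pair g i j F v \<partial>torus N)"
    by (simp add: rhs X.integral_fst'[OF h_integrable])
  finally show "(\<integral>v. Q_pair g i j \<phi> v * F v \<partial>torus N) = (\<integral>v. \<phi> v * Qstar_pair g i j F v \<partial>torus N)" .
qed

end

lemma is_adjoint_on_average:
  fixes Q Qs :: "'p \<Rightarrow> ((nat \<Rightarrow> complex) \<Rightarrow> real) \<Rightarrow> (nat \<Rightarrow> complex) \<Rightarrow> real"
  assumes "finite P"
    and adjoint: "\<And>p \<phi> F B\<^sub>\<phi> B\<^sub>F. p \<in> P \<Longrightarrow> \<phi> \<in> borel_measurable M \<Longrightarrow> F \<in> borel_measurable M \<Longrightarrow>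
      (\<And>v. v \<in> space M \<Longrightarrow> \<bar>\<phi> v\<bar> \<le> B\<^sub>\<phi>) \<Longrightarrow> (\<And>v. v \<in> space M \<Longrightarrow> \<bar>F v\<bar> \<le> B\<^sub>F) \<Longrightarrow>
      integrable M (\<lambda>v. Q p \<phi> v * F v) \<and> integrable M (\<lambda>v. \<phi> v * Qs p F v)
      \<and> (\<integral>v. Q p \<phi> v * F v \<partial>M) = (\<integral>v. \<phi> v * Qs p F v \<partial>M)"
  shows "is_adjoint_on M (\<lambda>\<phi> v. a * (\<Sum>p\<in>P. Q p \<phi> v)) (\<lambda>F v. a * (\<Sum>p\<in>P. Qs p F v))"
  unfolding is_adjoint_on_def
proof (intro allI impI, elim exE)
  fix \<phi> F :: "(nat \<Rightarrow> complex) \<Rightarrow> real" and B\<^sub>\<phi> B\<^sub>F :: real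
  assume "\<phi> \<in> borel_measurable M" "F \<in> borel_measurable M"
    and "\<forall>v\<in>space M. \<bar>\<phi> v\<bar> \<le> B\<^sub>\<phi>" "\<forall>v\<in>space M. \<bar>F v\<bar> \<le> B\<^sub>F"
  then have pair: "integrable M (\<lambda>v. Q p \<phi> v * F v) \<and> integrable M (\<lambda>v. \<phi> v * Qs p F v)
      \<and> (\<integral>v. Q p \<phi> v * F v \<partial>M) = (\<integral>v. \<phi> v * Qs p F v \<partial>M)" if "p \<in> P" for p
    using adjoint[OF that] by blast
  have "(\<integral>v. a * (\<Sum>p\<in>P. Q p \<phi> v) * F v \<partial>M) = a * (\<Sum>p\<in>P. \<integral>v. Q p \<phi> v * F v \<partial>M)"
    using pair by (simp add: sum_distrib_right mult.assoc)
  also have "\<dots> = a * (\<Sum>p\<in>P. \<integral>v. \<phi> v * Qs p F v \<partial>M)"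
    using pair by simp
  also have "\<dots> = (\<integral>v. \<phi> v * (a * (\<Sum>p\<in>P. Qs p F v)) \<partial>M)"
    using pair by (simp add: sum_distrib_left mult.left_commute)
  finally show "(\<integral>v. a * (\<Sum>p\<in>P. Q p \<phi> v) * F v \<partial>M) = (\<integral>v. \<phi> v * (a * (\<Sum>p\<in>P. Qs p F v)) \<partial>M)" .
qed

lemma finite_pairs: "finite (pairs N)"
  by (rule finite_subset[of _ "{..<N} \<times> {..<N}"]) (auto simp: pairs_def)

lemma card_pairs: "card (pairs N) = N choose 2"
proof (induction N)
  case 0
  then show ?case by (simp add: pairs_def)
next
  case (Suc N)
  have "pairs (Suc N) = pairs N \<union> (\<lambda>i. (i, N)) ` {..<N}"
    by (auto simp: pairs_def less_Suc_eq)
  moreover have "pairs N \<inter> (\<lambda>i. (i, N)) ` {..<N} = {}"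
    by (auto simp: pairs_def)
  ultimately have "card (pairs (Suc N)) = card (pairs N) + N"
    by (simp add: card_Un_disjoint finite_pairs card_image inj_on_def)
  then show ?case
    using Suc binomial_Suc_Suc[of N 1] by (simp add: numeral_2_eq_2)
qed

theorem mainTheorem1:
  fixes N :: nat and g :: "complex \<Rightarrow> real"
  assumes "N \<ge> 2"
    and "g \<in> borel_measurable circle_measure"
    and "\<forall>w\<in>space circle_measure. g w \<ge> 0"
    and "(\<integral>\<^sup>+ w. ennreal (g w) \<partial>circle_measure) = 1"
    and "\<forall>w\<in>space circle_measure. g w = g (cnj w)"
  defines "Qs \<equiv> (\<lambda>F v. (1 / real (N choose 2)) * (\<Sum>(i, j)\<in>pairs N. Qstar_pair g i j F v))"
  shows "is_adjoint_on (torus N) (BDG_Q N g) Qs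
    \<and> (\<forall>F v. master_generator N Qs F v
          = real N / real (N choose 2) * (\<Sum>(i, j)\<in>pairs N. Qstar_pair g i j F v - F v))"
proof
  have "BDG_Q N g = (\<lambda>\<phi> v. (1 / real (N choose 2)) * (\<Sum>p\<in>pairs N. Q_pair g (fst p) (snd p) \<phi> v))"
    by (intro ext) (simp add: BDG_Q_eq_average case_prod_beta)
  moreover have "Qs = (\<lambda>F v. (1 / real (N choose 2)) * (\<Sum>p\<in>pairs N. Qstar_pair g (fst p) (snd p) F v))"
    by (simp add: Qs_def case_prod_beta)
  moreover have "is_adjoint_on (torus N)
      (\<lambda>\<phi> v. (1 / real (N choose 2)) * (\<Sum>p\<in>pairs N. Q_pair g (fst p) (snd p) \<phi> v))
      (\<lambda>F v. (1 / real (N choose 2)) * (\<Sum>p\<in>pairs N. Qstar_pair g (fst p) (snd p) F v))"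
    using assms(2-4) by (intro is_adjoint_on_average finite_pairs conjI Q_pair_adjoint) (auto simp: pairs_def)
  ultimately show "is_adjoint_on (torus N) (BDG_Q N g) Qs"
    by simp
  have "real (N choose 2) \<noteq> 0"
    using assms(1) by simp
  then show "\<forall>F v. master_generator N Qs F v
      = real N / real (N choose 2) * (\<Sum>(i, j)\<in>pairs N. Qstar_pair g i j F v - F v)"
    by (simp add: master_generator_def Qs_def sum_subtractf card_pairs field_simps case_prod_beta)
qed

end
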